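(* Let $H$ be a graph with $\chi(H)=r\geq 3$ and $\gcd(H)>1$. Then for every integer $n\geq r$ there exists a balanced $r$-partite graph $G$ on $rn$ vertices with $\delta^*(G)\geq \left(1-\frac{1}{\chi^*(H)}\right)n-1=\left(1-\frac1r\right)n-1$ that has no perfect $H$-tiling.
   Context: An $H$-tiling in $G$ is a collection of vertex-disjoint copies of $H$ in $G$; it is perfect if it covers every vertex of $G$. For an $r$-partite graph $G$ with vertex classes $V_1,\dots,V_r$, $G$ is balanced if all classes have the same size, and $\delta^*(G)$ is the largest integer $m$ such that for all $i\neq j$ every vertex of $V_i$ has at least $m$ neighbours in $V_j$. For $H$ with $\chi(H)=r$, let $\mathcal C$ be the set of proper $r$-colourings of $H$ with colour classes $X_1^\phi,\dots,X_r^\phi$, and $\mathcal D(H)=\bigcup_{\phi\in\mathcal C}\{|X_i^\phi|-|X_j^\phi|: i,j\in[r]\}$; $\gcd(H)$ is the greatest common divisor of the elements of $\mathcal D(H)$ if $\mathcal D(H)\ne\{0\}$ and $\infty$ otherwise. $\chi^*(H)=\chi(H)$ when $\gcd(H)\neq 1$. *)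

theory Defs
  imports Main "HOL-Library.Extended_Nat"
begin

definition fin_graph :: "'a set \<Rightarrow> ('a \<Rightarrow> 'a \<Rightarrow> bool) \<Rightarrow> bool" where
  "fin_graph V E \<longleftrightarrow> finite V \<and> (\<forall>u v. E u v \<longrightarrow> E v u) \<and> (\<forall>v. \<not> E v v)
     \<and> (\<forall>u v. E u v \<longrightarrow> u \<in> V \<and> v \<in> V)"

definition proper_colouring :: "'a set \<Rightarrow> ('a \<Rightarrow> 'a \<Rightarrow> bool) \<Rightarrow> nat \<Rightarrow> ('a \<Rightarrow> nat) \<Rightarrow> bool" where
  "proper_colouring V E k c \<longleftrightarrow> (\<forall>v\<in>V. c v < k) \<and> (\<forall>u\<in>V. \<forall>v\<in>V. E u v \<longrightarrow> c u \<noteq> c v)"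

definition chromatic_number :: "'a set \<Rightarrow> ('a \<Rightarrow> 'a \<Rightarrow> bool) \<Rightarrow> nat" where
  "chromatic_number V E = (LEAST k. \<exists>c. proper_colouring V E k c)"

definition colour_class :: "'a set \<Rightarrow> ('a \<Rightarrow> nat) \<Rightarrow> nat \<Rightarrow> 'a set" where
  "colour_class V c i = {v\<in>V. c v = i}"

definition diff_set :: "'a set \<Rightarrow> ('a \<Rightarrow> 'a \<Rightarrow> bool) \<Rightarrow> int set" where
  "diff_set V E = {int (card (colour_class V c i)) - int (card (colour_class V c j)) | c i j.
      proper_colouring V E (chromatic_number V E) c \<and> i < chromatic_number V E \<and> j < chromatic_number V E}"

definition graph_gcd :: "'a set \<Rightarrow> ('a \<Rightarrow> 'a \<Rightarrow> bool) \<Rightarrow> enat" where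
  "graph_gcd V E = (if diff_set V E = {0} then \<infinity> else enat (nat (Gcd (diff_set V E))))"

definition is_copy :: "'b set \<Rightarrow> ('b \<Rightarrow> 'b \<Rightarrow> bool) \<Rightarrow> 'a set \<Rightarrow> ('a \<Rightarrow> 'a \<Rightarrow> bool) \<Rightarrow> ('b \<Rightarrow> 'a) \<Rightarrow> bool" where
  "is_copy VH EH VG EG f \<longleftrightarrow> inj_on f VH \<and> f ` VH \<subseteq> VG \<and> (\<forall>u\<in>VH. \<forall>v\<in>VH. EH u v \<longrightarrow> EG (f u) (f v))"

definition perfect_tiling :: "'b set \<Rightarrow> ('b \<Rightarrow> 'b \<Rightarrow> bool) \<Rightarrow> 'a set \<Rightarrow> ('a \<Rightarrow> 'a \<Rightarrow> bool) \<Rightarrow> bool" where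
  "perfect_tiling VH EH VG EG \<longleftrightarrow> (\<exists>F. (\<forall>f\<in>F. is_copy VH EH VG EG f)
      \<and> (\<forall>f\<in>F. \<forall>g\<in>F. f \<noteq> g \<longrightarrow> f ` VH \<inter> g ` VH = {})
      \<and> (\<Union>f\<in>F. f ` VH) = VG)"

definition part :: "nat \<Rightarrow> nat \<Rightarrow> (nat \<times> nat) set" where
  "part n i = {i} \<times> {..<n}"

definition balanced_rpartite :: "nat \<Rightarrow> nat \<Rightarrow> (nat \<times> nat \<Rightarrow> nat \<times> nat \<Rightarrow> bool) \<Rightarrow> bool" where
  "balanced_rpartite r n E \<longleftrightarrow> fin_graph ({..<r} \<times> {..<n}) E
      \<and> (\<forall>i<r. \<forall>u\<in>part n i. \<forall>v\<in>part n i. \<not> E u v)"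

definition delta_star :: "nat \<Rightarrow> nat \<Rightarrow> (nat \<times> nat \<Rightarrow> nat \<times> nat \<Rightarrow> bool) \<Rightarrow> nat" where
  "delta_star r n E = (GREATEST m. \<forall>i<r. \<forall>j<r. i \<noteq> j \<longrightarrow>
      (\<forall>v\<in>part n i. m \<le> card {u\<in>part n j. E v u}))"

end

theory Submission
  imports Defs "HOL-Number_Theory.Cong"
begin

text \<open>Colour the vertex \<open>(i, x)\<close> of the balanced \<open>r\<close>-partite vertex set with \<open>(i + x) mod r\<close>,
  then recolour the single vertex \<open>(1, 0)\<close> from 1 to 0, and join two vertices iff they lie in
  different parts and have different colours. Each colour class meets each part in at most
  \<open>n div r + 1\<close> vertices, so \<open>\<delta>\<^sup>* \<ge> n - n div r - 1\<close>. Every copy of \<open>H\<close> inherits a proper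
  \<open>r\<close>-colouring, so on it the number of 0-coloured minus 2-coloured vertices lies in \<open>D(H)\<close>
  and is divisible by \<open>gcd(H) > 1\<close>. Summed over a perfect tiling this would make the
  corresponding difference for the whole graph divisible as well; but the cyclic colouring
  is perfectly balanced and the recolouring makes that difference exactly 1.\<close>

lemma card_residue_class_le:
  assumes "0 < r"
  shows "card {y\<in>{..<n}. (j + y) mod r = c} \<le> n div r + 1"
proof -
  let ?S = "{y\<in>{..<n}. (j + y) mod r = c}"
  have "inj_on (\<lambda>y. y div r) ?S"
  proof (rule inj_onI)
    fix y y' assume "y \<in> ?S" "y' \<in> ?S" and same_div: "y div r = y' div r"
    then have "[j + y = j + y'] (mod r)" by (simp add: cong_def)
    then have "y mod r = y' mod r" using cong_add_lcancel_nat cong_def by blast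
    with same_div show "y = y'" by (metis div_mult_mod_eq)
  qed
  moreover have "(\<lambda>y. y div r) ` ?S \<subseteq> {..n div r}" by (auto intro: div_le_mono)
  ultimately show ?thesis using card_inj_on_le[of _ ?S "{..n div r}"] by simp
qed

lemma card_pred_multiples_le: "card {y\<in>{..<n}. r dvd Suc y} \<le> n div r"
proof -
  have "{y\<in>{..<n}. r dvd Suc y} \<subseteq> (\<lambda>k. k * r - 1) ` {1..n div r}"
  proof
    fix y assume "y \<in> {y\<in>{..<n}. r dvd Suc y}"
    then obtain k where y: "y < n" "Suc y = r * k" by (auto elim: dvdE)
    then have "1 \<le> k" by (cases k) auto
    moreover have "k \<le> n div r"
      using y div_le_mono[of "Suc y" n r] by (cases "r = 0") auto
    moreover have "y = k * r - 1" using y(2) by (simp add: mult.commute)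
    ultimately show "y \<in> (\<lambda>k. k * r - 1) ` {1..n div r}" by auto
  qed
  then have "card {y\<in>{..<n}. r dvd Suc y} \<le> card ((\<lambda>k. k * r - 1) ` {1..n div r})"
    by (intro card_mono) auto
  also have "\<dots> \<le> n div r" using card_image_le[of "{1..n div r}"] by simp
  finally show ?thesis .
qed

lemma sum_mod_shift:
  fixes g :: "nat \<Rightarrow> 'a::comm_monoid_add"
  assumes "0 < r"
  shows "(\<Sum>i<r. g ((i + x) mod r)) = (\<Sum>k<r. g k)"
proof (rule sum.reindex_bij_betw)
  have "inj_on (\<lambda>i. (i + x) mod r) {..<r}"
    by (rule inj_onI) (metis cong_add_rcancel_nat cong_def lessThan_iff mod_less)
  moreover have "(\<lambda>i. (i + x) mod r) ` {..<r} \<subseteq> {..<r}" using assms by auto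
  ultimately show "bij_betw (\<lambda>i. (i + x) mod r) {..<r} {..<r}"
    by (simp add: bij_betw_def endo_inj_surj)
qed

lemma nonempty_if_chromatic_number_pos:
  assumes "0 < chromatic_number V E"
  shows "V \<noteq> {}"
proof
  assume "V = {}"
  then have "proper_colouring V E 0 (\<lambda>_. 0)" by (simp add: proper_colouring_def)
  then have "chromatic_number V E = 0"
    unfolding chromatic_number_def by (metis (mono_tags, lifting) Least_eq_0)
  with assms show False by simp
qed

lemma graph_gcd_gt_1_common_divisor:
  assumes "graph_gcd V E > 1"
  obtains d :: nat where "1 < d" "\<And>z. z \<in> diff_set V E \<Longrightarrow> int d dvd z"
proof (cases "diff_set V E = {0}")
  case True
  then show ?thesis using that[of 2] by auto
next
  case False
  with assms have gcd_gt_1: "1 < nat (Gcd (diff_set V E))"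
    by (simp add: graph_gcd_def one_enat_def)
  then have "int (nat (Gcd (diff_set V E))) dvd z" if "z \<in> diff_set V E" for z
    using Gcd_dvd[OF that] by simp
  with gcd_gt_1 show ?thesis by (rule that)
qed

lemma colour_class_diff_in_diff_set:
  assumes "proper_colouring V E (chromatic_number V E) c"
    and "a < chromatic_number V E" "b < chromatic_number V E"
  shows "int (card (colour_class V c a)) - int (card (colour_class V c b)) \<in> diff_set V E"
  using assms unfolding diff_set_def by blast

lemma sum_colour_indicator_image:
  assumes "inj_on f V" "finite V"
  shows "(\<Sum>v\<in>f ` V. of_bool (col v = a) - of_bool (col v = b) :: int)
    = int (card (colour_class V (col \<circ> f) a)) - int (card (colour_class V (col \<circ> f) b))"
proof -
  have "(\<Sum>v\<in>f ` V. of_bool (col v = a) - of_bool (col v = b) :: int)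
      = (\<Sum>v\<in>V. of_bool (col (f v) = a) - of_bool (col (f v) = b))"
    by (simp add: sum.reindex[OF assms(1)])
  also have "\<dots> = int (card (colour_class V (col \<circ> f) a)) - int (card (colour_class V (col \<circ> f) b))"
    using assms(2) by (simp add: sum_subtractf sum_of_bool_eq colour_class_def Int_def)
  finally show ?thesis .
qed

lemma perfect_tiling_weight_dvd:
  fixes w :: "'a \<Rightarrow> 'c::comm_semiring_1"
  assumes "perfect_tiling VH EH VG EG" "finite VG" "VH \<noteq> {}"
    and "\<And>f. is_copy VH EH VG EG f \<Longrightarrow> d dvd sum w (f ` VH)"
  shows "d dvd sum w VG"
proof -
  from assms(1) obtain F where copies: "\<forall>f\<in>F. is_copy VH EH VG EG f"
    and disjoint: "\<forall>f\<in>F. \<forall>g\<in>F. f \<noteq> g \<longrightarrow> f ` VH \<inter> g ` VH = {}"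
    and cover: "(\<Union>f\<in>F. f ` VH) = VG"
    unfolding perfect_tiling_def by blast
  have "inj_on (\<lambda>f. f ` VH) F"
    using disjoint \<open>VH \<noteq> {}\<close> by (intro inj_onI) blast
  moreover have "(\<lambda>f. f ` VH) ` F \<subseteq> Pow VG" using cover by blast
  ultimately have "finite F"
    using \<open>finite VG\<close> by (meson finite_Pow_iff finite_imageD finite_subset)
  have "sum w VG = (\<Sum>f\<in>F. sum w (f ` VH))"
    unfolding cover[symmetric] using \<open>finite F\<close> \<open>finite VG\<close> cover disjoint
    by (intro sum.UNION_disjoint) (auto intro: finite_subset)
  then show ?thesis using copies assms(4) by (simp add: dvd_sum)
qed

definition colour_graph :: "nat \<Rightarrow> nat \<Rightarrow> (nat \<times> nat \<Rightarrow> nat) \<Rightarrow> nat \<times> nat \<Rightarrow> nat \<times> nat \<Rightarrow> bool"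
  where "colour_graph r n col u v \<longleftrightarrow>
    u \<in> {..<r} \<times> {..<n} \<and> v \<in> {..<r} \<times> {..<n} \<and> fst u \<noteq> fst v \<and> col u \<noteq> col v"

lemma balanced_rpartite_colour_graph: "balanced_rpartite r n (colour_graph r n col)"
  unfolding balanced_rpartite_def fin_graph_def colour_graph_def Defs.part_def by auto

lemma proper_colouring_copy_colour_graph:
  assumes "is_copy VH EH ({..<r} \<times> {..<n}) (colour_graph r n col) f" "\<And>v. col v < r"
  shows "proper_colouring VH EH r (col \<circ> f)"
  using assms unfolding proper_colouring_def is_copy_def colour_graph_def by auto

lemma delta_star_colour_graph_ge:
  assumes "2 \<le> r" "0 < n" "\<And>j c. card {y\<in>{..<n}. col (j, y) = c} \<le> k"
  shows "n - k \<le> delta_star r n (colour_graph r n col)"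
  unfolding delta_star_def
proof (rule Greatest_le_nat[of _ _ n], goal_cases)
  case 1
  show ?case
  proof (intro allI impI ballI)
    fix i j v assume ij: "i < r" "j < r" "i \<noteq> j" and v: "v \<in> part n i"
    let ?same = "Pair j ` {y\<in>{..<n}. col (j, y) = col v}"
    have "card ?same \<le> card {y\<in>{..<n}. col (j, y) = col v}" by (rule card_image_le) simp
    also have "\<dots> \<le> k" by (rule assms(3))
    finally have "n - k \<le> card (part n j) - card ?same" by (simp add: Defs.part_def)
    also have "\<dots> \<le> card (part n j - ?same)" by (rule diff_card_le_card_Diff) simp
    also have "\<dots> \<le> card {u\<in>part n j. colour_graph r n col v u}"
      using ij v by (intro card_mono) (auto simp: Defs.part_def colour_graph_def)
    finally show "n - k \<le> card {u\<in>part n j. colour_graph r n col v u}" .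
  qed
next
  case (2 m)
  then have "m \<le> card {u\<in>part n 1. colour_graph r n col (0, 0) u}"
    using assms(1,2) by (auto simp: Defs.part_def)
  also have "\<dots> \<le> card (part n 1)" by (intro card_mono) (auto simp: Defs.part_def)
  finally show ?case by (simp add: Defs.part_def)
qed

definition defect_colouring :: "nat \<Rightarrow> nat \<times> nat \<Rightarrow> nat"
  where "defect_colouring r = (\<lambda>(i, x). (i + x) mod r)((1, 0) := 0)"

lemma defect_colouring_less: "0 < r \<Longrightarrow> defect_colouring r v < r"
  by (auto simp: defect_colouring_def split: prod.splits)

lemma card_defect_colour_class_le:
  assumes "0 < r"
  shows "card {y\<in>{..<n}. defect_colouring r (j, y) = c} \<le> n div r + 1"
proof (cases "j = 1 \<and> c = 0")
  case True
  then have "{y\<in>{..<n}. defect_colouring r (j, y) = c} \<subseteq> insert 0 {y\<in>{..<n}. r dvd Suc y}"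
    by (auto simp: defect_colouring_def mod_eq_0_iff_dvd)
  then have "card {y\<in>{..<n}. defect_colouring r (j, y) = c}
      \<le> card (insert 0 {y\<in>{..<n}. r dvd Suc y})"
    by (intro card_mono) auto
  also have "\<dots> \<le> n div r + 1"
    using card_pred_multiples_le[of n r] by (simp add: card_insert_if)
  finally show ?thesis .
next
  case False
  then have "{y\<in>{..<n}. defect_colouring r (j, y) = c} \<subseteq> {y\<in>{..<n}. (j + y) mod r = c}"
    by (auto simp: defect_colouring_def)
  then have "card {y\<in>{..<n}. defect_colouring r (j, y) = c}
      \<le> card {y\<in>{..<n}. (j + y) mod r = c}"
    by (intro card_mono) auto
  also have "\<dots> \<le> n div r + 1" using card_residue_class_le[OF assms] .
  finally show ?thesis .
qed

lemma defect_colouring_weight: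
  assumes "2 < r" "0 < n"
  shows "(\<Sum>v\<in>{..<r} \<times> {..<n}.
    of_bool (defect_colouring r v = 0) - of_bool (defect_colouring r v = 2)) = (1::int)"
proof -
  define g :: "nat \<Rightarrow> int" where "g k = of_bool (k = 0) - of_bool (k = 2)" for k
  let ?V = "{..<r} \<times> {..<n}"
  have "(\<Sum>v\<in>?V. g ((fst v + snd v) mod r)) = (\<Sum>i<r. \<Sum>x<n. g ((i + x) mod r))"
    by (simp add: sum.cartesian_product case_prod_beta)
  also have "\<dots> = (\<Sum>x<n. \<Sum>i<r. g ((i + x) mod r))" by (rule sum.swap)
  also have "\<dots> = (\<Sum>x<n. \<Sum>k<r. g k)" using assms(1) by (simp add: sum_mod_shift)
  also have "(\<Sum>k<r. g k) = 0"
  proof -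
    have "{k. k = 0 \<and> k < r} = {0}" "{k. k = 2 \<and> k < r} = {2}" using assms(1) by auto
    then show ?thesis by (simp add: g_def sum_subtractf sum_of_bool_eq Int_def)
  qed
  finally have balanced: "(\<Sum>v\<in>?V. g ((fst v + snd v) mod r)) = 0" by simp
  have "(1, 0) \<in> ?V" using assms by auto
  then have "(\<Sum>v\<in>?V. g (defect_colouring r v))
      = g (defect_colouring r (1, 0)) + (\<Sum>v\<in>?V - {(1, 0)}. g (defect_colouring r v))"
    by (intro sum.remove) auto
  also have "(\<Sum>v\<in>?V - {(1, 0)}. g (defect_colouring r v))
      = (\<Sum>v\<in>?V - {(1, 0)}. g ((fst v + snd v) mod r))"
    by (intro sum.cong) (auto simp: defect_colouring_def)
  also have "\<dots> = (\<Sum>v\<in>?V. g ((fst v + snd v) mod r)) - g (1 mod r)"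
    using \<open>(1, 0) \<in> ?V\<close> by (simp add: sum_diff1)
  finally show ?thesis using balanced assms(1) by (simp add: g_def defect_colouring_def)
qed

lemma delta_star_defect_colour_graph_ge:
  assumes "3 \<le> r" "r \<le> n"
  shows "(1 - 1 / real r) * real n - 1 \<le> real (delta_star r n (colour_graph r n (defect_colouring r)))"
proof -
  have "n - (n div r + 1) \<le> delta_star r n (colour_graph r n (defect_colouring r))"
    using assms card_defect_colour_class_le by (intro delta_star_colour_graph_ge) auto
  moreover have "n div r + 1 \<le> n"
    using assms div_le_mono2[of 3 r n] by linarith
  moreover have "real (n div r) \<le> real n / real r" by (simp add: of_nat_div_le_of_nat)
  ultimately show ?thesis
    using assms by (simp add: of_nat_diff algebra_simps flip: of_nat_le_iff)
qed

lemma no_perfect_tiling_defect_colour_graph: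
  assumes "fin_graph VH EH" "chromatic_number VH EH = r" "3 \<le> r" "graph_gcd VH EH > 1" "0 < n"
  shows "\<not> perfect_tiling VH EH ({..<r} \<times> {..<n}) (colour_graph r n (defect_colouring r))"
proof
  obtain d :: nat where "1 < d" and d_dvd: "\<And>z. z \<in> diff_set VH EH \<Longrightarrow> int d dvd z"
    using graph_gcd_gt_1_common_divisor[OF assms(4)] by blast
  assume "perfect_tiling VH EH ({..<r} \<times> {..<n}) (colour_graph r n (defect_colouring r))"
  then have "int d dvd (\<Sum>v\<in>{..<r} \<times> {..<n}.
      of_bool (defect_colouring r v = 0) - of_bool (defect_colouring r v = 2))"
  proof (rule perfect_tiling_weight_dvd)
    show "VH \<noteq> {}" using nonempty_if_chromatic_number_pos[of VH EH] assms(2,3) by simp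
    fix f assume copy: "is_copy VH EH ({..<r} \<times> {..<n}) (colour_graph r n (defect_colouring r)) f"
    then have "proper_colouring VH EH r (defect_colouring r \<circ> f)"
      using assms(3) defect_colouring_less by (intro proper_colouring_copy_colour_graph) auto
    then have "int (card (colour_class VH (defect_colouring r \<circ> f) 0))
        - int (card (colour_class VH (defect_colouring r \<circ> f) 2)) \<in> diff_set VH EH"
      using assms(2,3) by (intro colour_class_diff_in_diff_set) auto
    moreover have "inj_on f VH" "finite VH"
      using copy assms(1) by (auto simp: is_copy_def fin_graph_def)
    ultimately show "int d dvd (\<Sum>v\<in>f ` VH.
        of_bool (defect_colouring r v = 0) - of_bool (defect_colouring r v = 2))"
      using d_dvd by (simp add: sum_colour_indicator_image)
  qed simp
  with \<open>1 < d\<close> assms(3,5) show False by (simp add: defect_colouring_weight)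
qed

theorem mainTheorem8:
  fixes VH :: "'b set" and EH :: "'b \<Rightarrow> 'b \<Rightarrow> bool" and r :: nat
  assumes "fin_graph VH EH"
    and "chromatic_number VH EH = r" and "r \<ge> 3"
    and "graph_gcd VH EH > 1"
  shows "\<forall>n::nat. n \<ge> r \<longrightarrow>
    (\<exists>EG. balanced_rpartite r n EG
       \<and> real (delta_star r n EG) \<ge> (1 - 1 / real r) * real n - 1
       \<and> \<not> perfect_tiling VH EH ({..<r} \<times> {..<n}) EG)"
proof (intro allI impI)
  fix n :: nat assume "n \<ge> r"
  with assms(3) have "0 < n" by simp
  show "\<exists>EG. balanced_rpartite r n EG
      \<and> real (delta_star r n EG) \<ge> (1 - 1 / real r) * real n - 1
      \<and> \<not> perfect_tiling VH EH ({..<r} \<times> {..<n}) EG"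
    using balanced_rpartite_colour_graph delta_star_defect_colour_graph_ge[OF assms(3) \<open>n \<ge> r\<close>]
      no_perfect_tiling_defect_colour_graph[OF assms \<open>0 < n\<close>] by blast
qed

end
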